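(* Let $\Gamma$ be a connected finite simple graph on $N\ge3$ vertices with minimum degree $d\ge3$ and $\varepsilon>\frac{\sqrt{d-1}}{d}$. If $u\ne v$ are vertices with $\mathcal N(u)\cap\mathcal N(v)\ne\emptyset$, then $$\big|\{w\in\mathcal N(u)\triangle\mathcal N(v):\deg w\in\{d,d+1\}\}\big|\ge 2d-1.$$
   Context: For a finite simple graph $\Gamma=(V,E)$ without isolated vertices, $\deg v$ is the number of neighbours of $v$ and $\mathcal N(v)=\{w\in V: w\sim v\}$; $\triangle$ denotes symmetric difference of sets. The normalized Laplacian acts on functions $f:V\to\mathbb R$ by $\Delta f(v)=f(v)-\frac{1}{\deg v}\sum_{w\sim v}f(w)$; its eigenvalues are $0=\lambda_1\le\lambda_2\le\dots\le\lambda_N$, and $\varepsilon:=\min_i|1-\lambda_i|$. $d$ denotes the minimum vertex degree. *)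

theory Defs
  imports Complex_Main
begin

definition simple_graph :: "'a set \<Rightarrow> ('a \<Rightarrow> 'a \<Rightarrow> bool) \<Rightarrow> bool" where
  "simple_graph V E \<longleftrightarrow> finite V \<and> (\<forall>x y. E x y \<longrightarrow> E y x) \<and> (\<forall>x. \<not> E x x)
     \<and> (\<forall>x y. E x y \<longrightarrow> x \<in> V \<and> y \<in> V)"

definition nbhd :: "'a set \<Rightarrow> ('a \<Rightarrow> 'a \<Rightarrow> bool) \<Rightarrow> 'a \<Rightarrow> 'a set" where
  "nbhd V E v = {w \<in> V. E w v}"

definition deg :: "'a set \<Rightarrow> ('a \<Rightarrow> 'a \<Rightarrow> bool) \<Rightarrow> 'a \<Rightarrow> nat" where
  "deg V E v = card (nbhd V E v)"

definition connected_graph :: "'a set \<Rightarrow> ('a \<Rightarrow> 'a \<Rightarrow> bool) \<Rightarrow> bool" where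
  "connected_graph V E \<longleftrightarrow> (\<forall>x\<in>V. \<forall>y\<in>V. E\<^sup>*\<^sup>* x y)"

definition min_degree :: "'a set \<Rightarrow> ('a \<Rightarrow> 'a \<Rightarrow> bool) \<Rightarrow> nat" where
  "min_degree V E = Min (deg V E ` V)"

definition norm_laplacian :: "'a set \<Rightarrow> ('a \<Rightarrow> 'a \<Rightarrow> bool) \<Rightarrow> ('a \<Rightarrow> real) \<Rightarrow> 'a \<Rightarrow> real" where
  "norm_laplacian V E f v = f v - (\<Sum>w\<in>nbhd V E v. f w) / real (deg V E v)"

definition laplacian_eigenvalue :: "'a set \<Rightarrow> ('a \<Rightarrow> 'a \<Rightarrow> bool) \<Rightarrow> real \<Rightarrow> bool" where
  "laplacian_eigenvalue V E lam \<longleftrightarrow>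
     (\<exists>f. (\<exists>v\<in>V. f v \<noteq> 0) \<and> (\<forall>v\<in>V. norm_laplacian V E f v = lam * f v))"

definition spectral_eps :: "'a set \<Rightarrow> ('a \<Rightarrow> 'a \<Rightarrow> bool) \<Rightarrow> real" where
  "spectral_eps V E = Min {\<bar>1 - lam\<bar> | lam. laplacian_eigenvalue V E lam}"

definition sym_diff :: "'a set \<Rightarrow> 'a set \<Rightarrow> 'a set" where
  "sym_diff A B = (A - B) \<union> (B - A)"

end

theory Submission
  imports Defs "HOL-Analysis.Analysis" "HOL-Library.Function_Algebras"
begin

text \<open>
  With the degree-weighted inner product \<open>\<langle>f, g\<rangle> = \<Sum>\<^sub>x deg x f x g x\<close>, the averaging operator
  \<open>P = I - \<Delta>\<close> is self-adjoint and its eigenvalues are the numbers \<open>1 - \<lambda>\<^sub>i\<close>, so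
  \<open>\<langle>P f, P f\<rangle> \<ge> \<epsilon>\<^sup>2 \<langle>f, f\<rangle>\<close> for every \<open>f\<close>. For \<open>f = 1\<^sub>u - 1\<^sub>v\<close> one has
  \<open>\<langle>f, f\<rangle> = deg u + deg v\<close> and \<open>\<langle>P f, P f\<rangle> = \<Sum> 1 / deg w\<close> over \<open>w \<in> \<N>(u) \<triangle> \<N>(v)\<close>.
  A common neighbour makes the symmetric difference have at most \<open>deg u + deg v - 2\<close>
  elements, and bounding \<open>1 / deg w\<close> by \<open>1 / (d + 2)\<close> outside the degrees \<open>d, d + 1\<close>
  turns \<open>\<epsilon>\<^sup>2 > (d - 1) / d\<^sup>2\<close> into the claimed count.

  Instead of a spectral theorem, the inequality for \<open>P\<close> comes from a minimiser of
  \<open>\<langle>P h, P h\<rangle> / \<langle>h, h\<rangle>\<close> (which exists by compactness): it is an eigenfunction of \<open>P\<^sup>2\<close>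
  with eigenvalue \<open>\<mu>\<close>, hence \<open>\<plusminus>\<surd>\<mu>\<close> is an eigenvalue of \<open>P\<close> and \<open>\<epsilon>\<^sup>2 \<le> \<mu>\<close>.
\<close>

definition walk_op :: "'a set \<Rightarrow> ('a \<Rightarrow> 'a \<Rightarrow> bool) \<Rightarrow> ('a \<Rightarrow> real) \<Rightarrow> 'a \<Rightarrow> real" where
  "walk_op V E f x = (\<Sum>w\<in>nbhd V E x. f w) / real (deg V E x)"

definition deg_inner :: "'a set \<Rightarrow> ('a \<Rightarrow> 'a \<Rightarrow> bool) \<Rightarrow> ('a \<Rightarrow> real) \<Rightarrow> ('a \<Rightarrow> real) \<Rightarrow> real" where
  "deg_inner V E f g = (\<Sum>x\<in>V. real (deg V E x) * f x * g x)"

lemma sum_fun_apply: "(\<Sum>i\<in>A. f i) x = (\<Sum>i\<in>A. f i x)"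
  by (induction A rule: infinite_finite_induct) auto

lemma quadratic_nonneg_imp_linear_coeff_zero:
  fixes B C :: real
  assumes C: "C \<ge> 0" and nonneg: "\<And>t. 0 \<le> 2 * t * B + t\<^sup>2 * C"
  shows "B = 0"
proof -
  define t where "t = - B / (C + 1)"
  have "0 \<le> (C + 1)\<^sup>2 * (2 * t * B + t\<^sup>2 * C)"
    using nonneg C by simp
  also have "(C + 1)\<^sup>2 * (2 * t * B + t\<^sup>2 * C) = 2 * B * (t * (C + 1)) * (C + 1) + (t * (C + 1))\<^sup>2 * C"
    by (simp add: algebra_simps power2_eq_square)
  also have "t * (C + 1) = - B"
    unfolding t_def using C by simp
  finally have "B\<^sup>2 * (C + 2) \<le> 0"
    by (simp add: algebra_simps power2_eq_square)
  then show ?thesis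
    using C by (simp add: mult_le_0_iff)
qed

lemma card_sym_diff_common_elem:
  assumes "finite A" "finite B" "c \<in> A" "c \<in> B"
  shows "card (sym_diff A B) + 2 \<le> card A + card B"
proof -
  have "card (A - B) \<le> card (A - {c})"
    using assms by (intro card_mono) auto
  moreover have "card (B - A) \<le> card (B - {c})"
    using assms by (intro card_mono) auto
  moreover have "card (sym_diff A B) \<le> card (A - B) + card (B - A)"
    unfolding sym_diff_def by (rule card_Un_le)
  moreover have "card A > 0" "card B > 0"
    using assms by (auto simp: card_gt_0_iff)
  ultimately show ?thesis
    using assms by simp
qed

lemma sum_inverse_le_two_levels:
  fixes k :: "'a \<Rightarrow> nat"
  assumes "finite S" "W \<subseteq> S" "d > 0"
    and "\<And>x. x \<in> W \<Longrightarrow> d \<le> k x" and "\<And>x. x \<in> S - W \<Longrightarrow> d + 2 \<le> k x"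
  shows "(\<Sum>x\<in>S. 1 / real (k x)) \<le> real (card W) / real d + real (card (S - W)) / real (d + 2)"
proof -
  have inverse_le: "1 / real (k x) \<le> 1 / real n" if "0 < n" "n \<le> k x" for n x
    using that by (simp add: frac_le)
  have "(\<Sum>x\<in>W. 1 / real (k x)) \<le> real (card W) * (1 / real d)"
    using assms(3,4) by (intro sum_bounded_above inverse_le)
  moreover have "(\<Sum>x\<in>S - W. 1 / real (k x)) \<le> real (card (S - W)) * (1 / real (d + 2))"
    using assms(5) by (intro sum_bounded_above inverse_le) auto
  moreover have "(\<Sum>x\<in>S. 1 / real (k x)) = (\<Sum>x\<in>W. 1 / real (k x)) + (\<Sum>x\<in>S - W. 1 / real (k x))"
    using sum.subset_diff[OF assms(2,1)] by (simp add: add.commute)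
  ultimately show ?thesis
    by simp
qed

lemma two_level_count_bound:
  fixes D a K L :: real
  assumes D: "D \<ge> 3" and a: "a \<ge> 2 * D" and KL: "K + L \<le> a - 2"
    and h: "(D - 1) / D\<^sup>2 * a < K / D + L / (D + 2)"
  shows "K > 2 * D - 2"
proof -
  have "(D - 1) / D\<^sup>2 * a < K / D + (a - 2 - K) / (D + 2)"
    using h KL D by (smt (verit) divide_right_mono)
  then have "(D - 1) / D\<^sup>2 * a * (D\<^sup>2 * (D + 2)) < (K / D + (a - 2 - K) / (D + 2)) * (D\<^sup>2 * (D + 2))"
    using D by (intro mult_strict_right_mono) auto
  moreover have "(D - 1) / D\<^sup>2 * a * (D\<^sup>2 * (D + 2)) = (D - 1) * a * (D + 2)"
    using D by (simp add: field_simps power2_eq_square)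
  moreover have "(K / D + (a - 2 - K) / (D + 2)) * (D\<^sup>2 * (D + 2))
      = K / D * D * D * (D + 2) + (a - 2 - K) / (D + 2) * (D + 2) * D\<^sup>2"
    by (simp add: algebra_simps power2_eq_square)
  moreover have "\<dots> = K * D * (D + 2) + (a - 2 - K) * D\<^sup>2"
    using D by simp
  ultimately have "(D - 1) * a * (D + 2) < K * D * (D + 2) + (a - 2 - K) * D\<^sup>2"
    by simp
  then have "2 * D * K > a * (D - 2) + 2 * D\<^sup>2"
    by (simp add: algebra_simps power2_eq_square)
  moreover have "a * (D - 2) \<ge> 2 * D * (D - 2)"
    using a D by (intro mult_right_mono) auto
  ultimately have "2 * D * K > 2 * D * (2 * D - 2)"
    by (simp add: algebra_simps power2_eq_square)
  then show ?thesis
    using D by simp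
qed

locale nonisolated_graph =
  fixes V :: "'a set" and E :: "'a \<Rightarrow> 'a \<Rightarrow> bool"
  assumes simple: "simple_graph V E" and deg_pos: "\<And>x. x \<in> V \<Longrightarrow> 0 < deg V E x"
begin

abbreviation P :: "('a \<Rightarrow> real) \<Rightarrow> 'a \<Rightarrow> real" where
  "P \<equiv> walk_op V E"

abbreviation ip :: "('a \<Rightarrow> real) \<Rightarrow> ('a \<Rightarrow> real) \<Rightarrow> real" where
  "ip \<equiv> deg_inner V E"

lemma finite_V: "finite V"
  using simple by (simp add: simple_graph_def)

lemma E_sym: "E x y \<Longrightarrow> E y x"
  using simple by (simp add: simple_graph_def)

lemma finite_nbhd: "finite (nbhd V E x)"
  using finite_V by (simp add: nbhd_def)

lemma sym_diff_nbhd_subset: "sym_diff (nbhd V E u) (nbhd V E v) \<subseteq> V"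
  unfolding sym_diff_def nbhd_def by auto

lemma norm_laplacian_eq: "norm_laplacian V E f x = f x - P f x"
  by (simp add: norm_laplacian_def walk_op_def)

lemma deg_inner_walk_op_left:
  "ip (P a) b = (\<Sum>x\<in>V. \<Sum>w\<in>V. if E w x then a w * b x else 0)"
proof -
  have "ip (P a) b = (\<Sum>x\<in>V. (\<Sum>w\<in>nbhd V E x. a w) * b x)"
    unfolding deg_inner_def walk_op_def using deg_pos by (intro sum.cong) auto
  also have "\<dots> = (\<Sum>x\<in>V. \<Sum>w\<in>V. if E w x then a w * b x else 0)"
    by (simp add: sum_distrib_right nbhd_def sum.inter_filter finite_V, intro sum.cong refl, simp)
  finally show ?thesis .
qed

lemma walk_op_self_adjoint: "ip (P a) b = ip a (P b)"
proof -
  have "ip a (P b) = ip (P b) a"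
    unfolding deg_inner_def by (simp add: mult_ac)
  also have "\<dots> = (\<Sum>x\<in>V. \<Sum>w\<in>V. if E w x then b w * a x else 0)"
    by (rule deg_inner_walk_op_left)
  also have "\<dots> = (\<Sum>w\<in>V. \<Sum>x\<in>V. if E w x then b w * a x else 0)"
    by (rule sum.swap)
  also have "\<dots> = ip (P a) b"
    unfolding deg_inner_walk_op_left by (intro sum.cong refl) (auto intro: E_sym simp: mult.commute)
  finally show ?thesis ..
qed

lemma walk_op_add_scaled: "P (\<lambda>y. f y + t * g y) = (\<lambda>x. P f x + t * P g x)"
  unfolding walk_op_def by (simp add: sum.distrib sum_distrib_left add_divide_distrib)

lemma walk_op_cong: "(\<And>y. y \<in> V \<Longrightarrow> f y = g y) \<Longrightarrow> P f x = P g x"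
  unfolding walk_op_def nbhd_def by (intro arg_cong2[where f="(/)"] sum.cong) auto

lemma deg_inner_self_term_nonneg: "0 \<le> real (deg V E x) * f x * f x"
  by (simp add: mult.assoc)

lemma deg_inner_self_nonneg: "ip f f \<ge> 0"
  unfolding deg_inner_def by (intro sum_nonneg deg_inner_self_term_nonneg)

lemma deg_inner_self_eq_0: "ip f f = 0 \<longleftrightarrow> (\<forall>x\<in>V. f x = 0)"
proof -
  have "ip f f = 0 \<longleftrightarrow> (\<forall>x\<in>V. real (deg V E x) * f x * f x = 0)"
    unfolding deg_inner_def by (rule sum_nonneg_eq_0_iff[OF finite_V deg_inner_self_term_nonneg])
  also have "\<dots> \<longleftrightarrow> (\<forall>x\<in>V. f x = 0)"
  proof (intro ball_cong refl)
    fix x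
    assume "x \<in> V"
    then show "real (deg V E x) * f x * f x = 0 \<longleftrightarrow> f x = 0"
      using deg_pos[of x] by simp
  qed
  finally show ?thesis .
qed

lemma deg_inner_add_scaled_self: "ip (\<lambda>y. f y + t * k y) (\<lambda>y. f y + t * k y)
   = ip f f + 2 * t * ip f k + t\<^sup>2 * ip k k"
  unfolding deg_inner_def
  by (simp add: sum.distrib sum_distrib_left algebra_simps power2_eq_square)

lemma deg_inner_diff_scaled_left: "ip (\<lambda>y. a y - m * b y) h = ip a h - m * ip b h"
  unfolding deg_inner_def by (simp add: sum_subtractf sum_distrib_left algebra_simps)

lemma deg_inner_scale_self: "ip (\<lambda>y. a * f y) (\<lambda>y. a * f y) = a\<^sup>2 * ip f f"
  unfolding deg_inner_def sum_distrib_left by (simp add: algebra_simps power2_eq_square)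

lemma walk_op_scale: "P (\<lambda>y. a * f y) x = a * P f x"
  unfolding walk_op_def by (simp add: sum_distrib_left)

lemma square_le_deg_inner_self: "y \<in> V \<Longrightarrow> (f y)\<^sup>2 \<le> ip f f"
proof -
  assume y: "y \<in> V"
  have "(f y)\<^sup>2 \<le> real (deg V E y) * f y * f y"
    using deg_pos[OF y] by (simp add: mult.assoc power2_eq_square mult_le_cancel_right1)
  also have "\<dots> \<le> ip f f"
    unfolding deg_inner_def using y finite_V by (intro member_le_sum deg_inner_self_term_nonneg)
  finally show ?thesis .
qed

lemma continuous_on_deg_inner_self: "continuous_on A (\<lambda>g. ip g g)"
  unfolding deg_inner_def
  by (intro continuous_intros continuous_on_subset[OF continuous_on_product_coordinates]) auto

lemma continuous_on_walk_op: "continuous_on A (\<lambda>g. P g x)"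
  unfolding walk_op_def divide_inverse
  by (intro continuous_intros continuous_on_subset[OF continuous_on_product_coordinates]) auto

lemma continuous_on_deg_inner_walk_op: "continuous_on A (\<lambda>g. ip (P g) (P g))"
  unfolding deg_inner_def by (intro continuous_intros continuous_on_walk_op)

lemma deg_inner_normalise:
  assumes pos: "ip h h > 0"
  obtains h' where "h' \<in> (\<Pi>\<^sub>E x\<in>UNIV. if x \<in> V then {-1..1} else {0})" "ip h' h' = 1"
    "ip (P h') (P h') * ip h h = ip (P h) (P h)"
proof
  define c where "c = sqrt (ip h h)"
  have c: "c > 0" "c\<^sup>2 = ip h h"
    unfolding c_def using pos by auto
  define h' where "h' = (\<lambda>y. if y \<in> V then (1 / c) * h y else 0)"
  have bound: "\<bar>h y\<bar> \<le> c" if "y \<in> V" for y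
    unfolding c_def using square_le_deg_inner_self[OF that] by (simp add: real_le_rsqrt)
  have "h' y \<in> (if y \<in> V then {-1..1} else {0})" for y
    using c bound[of y] by (auto simp: h'_def abs_le_iff field_simps)
  then show "h' \<in> (\<Pi>\<^sub>E x\<in>UNIV. if x \<in> V then {-1..1} else {0})"
    by (intro PiE_I) auto
  have "ip h' h' = ip (\<lambda>y. (1 / c) * h y) (\<lambda>y. (1 / c) * h y)"
    unfolding deg_inner_def h'_def by (intro sum.cong) auto
  then show "ip h' h' = 1"
    using c pos deg_inner_scale_self[of "1 / c" h] by (simp add: power_divide)
  have "P h' x = (1 / c) * P h x" for x
    using walk_op_cong[of h' "\<lambda>y. (1 / c) * h y" x] walk_op_scale[of "1 / c" h x] by (simp add: h'_def)
  then have "P h' = (\<lambda>x. (1 / c) * P h x)" ..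
  then show "ip (P h') (P h') * ip h h = ip (P h) (P h)"
    using c pos deg_inner_scale_self[of "1 / c" "P h"] by (simp add: power_divide)
qed

lemma walk_op_rayleigh_minimiser:
  assumes "V \<noteq> {}"
  obtains g where "ip g g = 1" "\<And>h. ip (P g) (P g) * ip h h \<le> ip (P h) (P h)"
proof -
  define K where "K = (\<Pi>\<^sub>E x\<in>UNIV. if x \<in> V then {-1..1::real} else {0})"
  define S where "S = K \<inter> {g. ip g g = 1}"
  have "compactin (product_topology (\<lambda>_. euclidean) UNIV) K"
    unfolding K_def by (subst compactin_PiE) auto
  then have "compact K"
    by (simp add: euclidean_product_topology)
  moreover have "closed {g. ip g g = 1}"
    by (rule closed_Collect_eq[OF continuous_on_deg_inner_self continuous_on_const])
  ultimately have "compact S"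
    unfolding S_def by auto
  obtain x0 where x0: "x0 \<in> V"
    using assms by auto
  have "ip (\<lambda>y. if y = x0 then 1 else 0) (\<lambda>y. if y = x0 then 1 else 0) = real (deg V E x0)"
    unfolding deg_inner_def using x0 finite_V
    by (subst sum.cong[OF refl, of _ _ "\<lambda>x. if x = x0 then real (deg V E x0) else 0"]) auto
  then have "ip (\<lambda>y. if y = x0 then 1 else 0) (\<lambda>y. if y = x0 then 1 else 0) > 0"
    using deg_pos[OF x0] by simp
  then obtain g0 where "g0 \<in> K" "ip g0 g0 = 1"
    by (rule deg_inner_normalise[folded K_def]) blast
  then have "S \<noteq> {}"
    unfolding S_def by auto
  from continuous_attains_inf[OF \<open>compact S\<close> this continuous_on_deg_inner_walk_op]
  obtain g where g: "g \<in> S" and min: "\<And>h. h \<in> S \<Longrightarrow> ip (P g) (P g) \<le> ip (P h) (P h)"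
    by blast
  show thesis
  proof
    show "ip g g = 1"
      using g unfolding S_def by simp
    show "ip (P g) (P g) * ip h h \<le> ip (P h) (P h)" for h
    proof (cases "ip h h = 0")
      case True
      then show ?thesis
        using deg_inner_self_nonneg by simp
    next
      case False
      then have pos: "ip h h > 0"
        using deg_inner_self_nonneg[of h] by linarith
      then obtain h' where h': "h' \<in> K" "ip h' h' = 1" "ip (P h') (P h') * ip h h = ip (P h) (P h)"
        by (rule deg_inner_normalise[folded K_def])
      then have "ip (P g) (P g) \<le> ip (P h') (P h')"
        by (intro min) (simp add: S_def)
      from mult_right_mono[OF this, of "ip h h"] show ?thesis
        using pos h'(3) by simp
    qed
  qed
qed

lemma rayleigh_minimiser_eigenfunction:
  assumes min: "\<And>h. \<mu> * ip h h \<le> ip (P h) (P h)" and attained: "\<mu> * ip g g = ip (P g) (P g)"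
    and "x \<in> V"
  shows "P (P g) x = \<mu> * g x"
proof -
  define r where "r = (\<lambda>y. P (P g) y - \<mu> * g y)"
  have "ip r h = 0" for h
  proof -
    let ?B = "ip (P g) (P h) - \<mu> * ip g h"
    have "0 \<le> 2 * t * ?B + t\<^sup>2 * (ip (P h) (P h) - \<mu> * ip h h)" for t
      using min[of "\<lambda>y. g y + t * h y"] attained
      by (simp add: walk_op_add_scaled deg_inner_add_scaled_self algebra_simps)
    then have "?B = 0"
      using min[of h]
      by (intro quadratic_nonneg_imp_linear_coeff_zero[where C = "ip (P h) (P h) - \<mu> * ip h h"]) auto
    then show ?thesis
      unfolding r_def deg_inner_diff_scaled_left walk_op_self_adjoint by simp
  qed
  then have "ip r r = 0" .
  then show ?thesis
    using assms(3) unfolding deg_inner_self_eq_0 r_def by simp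
qed

lemma laplacian_eigenvalue_iff_walk_op:
  "laplacian_eigenvalue V E lam \<longleftrightarrow> (\<exists>f. (\<exists>x\<in>V. f x \<noteq> 0) \<and> (\<forall>x\<in>V. P f x = (1 - lam) * f x))"
  unfolding laplacian_eigenvalue_def norm_laplacian_eq
  by (intro ex_cong1 conj_cong refl ball_cong) (auto simp: algebra_simps)

lemma laplacian_eigenvalue_of_walk_op_square:
  assumes nz: "\<exists>x\<in>V. g x \<noteq> 0" and s: "s \<ge> 0" and eig: "\<And>x. x \<in> V \<Longrightarrow> P (P g) x = s\<^sup>2 * g x"
  shows "\<exists>lam. laplacian_eigenvalue V E lam \<and> \<bar>1 - lam\<bar> = s"
proof (cases "\<exists>x\<in>V. P g x + s * g x \<noteq> 0")
  case True
  define h where "h = (\<lambda>y. P g y + s * g y)"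
  have "laplacian_eigenvalue V E (1 - s)"
    unfolding laplacian_eigenvalue_iff_walk_op
  proof (intro exI conjI ballI)
    show "\<exists>x\<in>V. h x \<noteq> 0"
      using True by (simp add: h_def)
    show "P h x = (1 - (1 - s)) * h x" if "x \<in> V" for x
      using eig[OF that] unfolding h_def walk_op_add_scaled by (simp add: algebra_simps power2_eq_square)
  qed
  then show ?thesis
    using s by auto
next
  case False
  have "laplacian_eigenvalue V E (1 + s)"
    unfolding laplacian_eigenvalue_iff_walk_op
  proof (intro exI conjI ballI)
    show "\<exists>x\<in>V. g x \<noteq> 0"
      by (rule nz)
    show "P g x = (1 - (1 + s)) * g x" if "x \<in> V" for x
    proof -
      have "P g x = - (s * g x)"
        using False that by force
      then show ?thesis
        by simp
    qed
  qed
  then show ?thesis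
    using s by auto
qed

lemma walk_op_eigenfunctions_orthogonal:
  assumes "\<And>x. x \<in> V \<Longrightarrow> P f x = a * f x" and "\<And>x. x \<in> V \<Longrightarrow> P g x = b * g x" and "a \<noteq> b"
  shows "ip f g = 0"
proof -
  have "a * ip f g = ip (P f) g"
    unfolding deg_inner_def sum_distrib_left using assms(1) by (auto intro!: sum.cong)
  also have "\<dots> = ip f (P g)"
    by (rule walk_op_self_adjoint)
  also have "\<dots> = b * ip f g"
    unfolding deg_inner_def sum_distrib_left using assms(2) by (auto intro!: sum.cong)
  finally show ?thesis
    using assms(3) by simp
qed

lemma orthogonal_family_card_le:
  assumes nz: "\<And>f. f \<in> A \<Longrightarrow> ip f f \<noteq> 0"
    and orth: "\<And>f g. f \<in> A \<Longrightarrow> g \<in> A \<Longrightarrow> f \<noteq> g \<Longrightarrow> ip f g = 0"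
    and supp: "\<And>f x. f \<in> A \<Longrightarrow> x \<notin> V \<Longrightarrow> f x = 0"
  shows "card A \<le> card V"
proof (cases "finite A")
  case finA: True
  interpret fun_space: vector_space "\<lambda>(c::real) (f::'a \<Rightarrow> real) x. c * f x"
    by unfold_locales (auto simp: algebra_simps fun_eq_iff)
  define \<delta> :: "'a \<Rightarrow> 'a \<Rightarrow> real" where "\<delta> = (\<lambda>v x. if x = v then 1 else 0)"
  have "fun_space.independent A"
  proof (rule fun_space.independent_if_scalars_zero[OF finA])
    fix c :: "('a \<Rightarrow> real) \<Rightarrow> real" and f
    assume zero: "(\<Sum>g\<in>A. (\<lambda>x. c g * g x)) = 0" and f: "f \<in> A"
    have "(\<Sum>g\<in>A. c g * g x) = 0" for x
      using fun_cong[OF zero, of x] by (simp add: sum_fun_apply)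
    then have "0 = (\<Sum>x\<in>V. real (deg V E x) * (\<Sum>g\<in>A. c g * g x) * f x)"
      by simp
    also have "\<dots> = (\<Sum>g\<in>A. c g * ip g f)"
      unfolding deg_inner_def sum_distrib_left sum_distrib_right
      by (subst sum.swap) (simp add: mult_ac)
    also have "\<dots> = c f * ip f f"
      using orth f finA by (subst sum.remove[OF finA f]) (auto intro!: sum.neutral)
    finally show "c f = 0"
      using nz[OF f] by simp
  qed
  moreover have "A \<subseteq> fun_space.span (\<delta> ` V)"
  proof
    fix f
    assume f: "f \<in> A"
    have "f = (\<Sum>v\<in>V. (\<lambda>x. f v * \<delta> v x))"
    proof
      fix x
      have "(\<Sum>v\<in>V. (\<lambda>x. f v * \<delta> v x)) x = (\<Sum>v\<in>V. if x = v then f x else 0)"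
        unfolding sum_fun_apply \<delta>_def by (intro sum.cong) auto
      then show "f x = (\<Sum>v\<in>V. (\<lambda>x. f v * \<delta> v x)) x"
        using supp[OF f] finite_V by (cases "x \<in> V") auto
    qed
    also have "\<dots> \<in> fun_space.span (\<delta> ` V)"
      by (intro fun_space.span_sum fun_space.span_scale fun_space.span_base) auto
    finally show "f \<in> fun_space.span (\<delta> ` V)" .
  qed
  ultimately have "card A \<le> card (\<delta> ` V)"
    using fun_space.independent_span_bound finite_V by blast
  also have "\<dots> \<le> card V"
    using finite_V by (rule card_image_le)
  finally show ?thesis .
qed simp

lemma finite_laplacian_eigenvalues: "finite {lam. laplacian_eigenvalue V E lam}"
proof (rule ccontr)
  assume "infinite {lam. laplacian_eigenvalue V E lam}"
  then obtain L where L: "L \<subseteq> {lam. laplacian_eigenvalue V E lam}" "finite L" "card L = card V + 1"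
    using infinite_arbitrarily_large by blast
  have "\<forall>lam\<in>L. \<exists>f. (\<exists>x\<in>V. f x \<noteq> 0) \<and> (\<forall>x\<in>V. P f x = (1 - lam) * f x) \<and> (\<forall>x. x \<notin> V \<longrightarrow> f x = 0)"
  proof
    fix lam
    assume "lam \<in> L"
    then obtain f where f: "\<exists>x\<in>V. f x \<noteq> 0" "\<forall>x\<in>V. P f x = (1 - lam) * f x"
      using L(1) laplacian_eigenvalue_iff_walk_op by blast
    define f' where "f' = (\<lambda>x. if x \<in> V then f x else 0)"
    have "P f' x = P f x" for x
      by (rule walk_op_cong) (simp add: f'_def)
    then show "\<exists>f. (\<exists>x\<in>V. f x \<noteq> 0) \<and> (\<forall>x\<in>V. P f x = (1 - lam) * f x) \<and> (\<forall>x. x \<notin> V \<longrightarrow> f x = 0)"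
      using f by (intro exI[of _ f']) (auto simp: f'_def)
  qed
  then obtain ef where "\<forall>lam\<in>L. (\<exists>x\<in>V. ef lam x \<noteq> 0) \<and> (\<forall>x\<in>V. P (ef lam) x = (1 - lam) * ef lam x)
      \<and> (\<forall>x. x \<notin> V \<longrightarrow> ef lam x = 0)"
    by (rule bchoice[THEN exE])
  then have ef: "\<And>lam. lam \<in> L \<Longrightarrow> \<exists>x\<in>V. ef lam x \<noteq> 0"
    "\<And>lam x. lam \<in> L \<Longrightarrow> x \<in> V \<Longrightarrow> P (ef lam) x = (1 - lam) * ef lam x"
    "\<And>lam x. lam \<in> L \<Longrightarrow> x \<notin> V \<Longrightarrow> ef lam x = 0"
    by auto
  have orth: "ip (ef l1) (ef l2) = 0" if "l1 \<in> L" "l2 \<in> L" "l1 \<noteq> l2" for l1 l2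
    using that by (intro walk_op_eigenfunctions_orthogonal[of _ "1 - l1" _ "1 - l2"] ef(2)) auto
  have nz: "ip (ef l) (ef l) \<noteq> 0" if "l \<in> L" for l
    using ef(1)[OF that] deg_inner_self_eq_0 by blast
  have "inj_on ef L"
    using orth nz by (intro inj_onI) fastforce
  then have "card (ef ` L) = card V + 1"
    using L(3) by (simp add: card_image)
  moreover have "card (ef ` L) \<le> card V"
    using orth nz ef(3) by (intro orthogonal_family_card_le) auto
  ultimately show False
    by simp
qed

lemma spectral_eps_sq_bound:
  assumes "V \<noteq> {}"
  shows "(spectral_eps V E)\<^sup>2 * ip h h \<le> ip (P h) (P h)"
proof -
  obtain g where g: "ip g g = 1" and min: "\<And>h. ip (P g) (P g) * ip h h \<le> ip (P h) (P h)"
    using walk_op_rayleigh_minimiser[OF assms] by blast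
  define \<mu> where "\<mu> = ip (P g) (P g)"
  define s where "s = sqrt \<mu>"
  have "\<mu> \<ge> 0"
    unfolding \<mu>_def by (rule deg_inner_self_nonneg)
  then have s: "s \<ge> 0" "s\<^sup>2 = \<mu>"
    unfolding s_def by auto
  have "P (P g) x = s\<^sup>2 * g x" if "x \<in> V" for x
    using rayleigh_minimiser_eigenfunction[of \<mu> g x] min g that s(2)
    unfolding \<mu>_def by (simp add: mult.commute)
  moreover have "\<exists>x\<in>V. g x \<noteq> 0"
    using g deg_inner_self_eq_0[of g] by auto
  ultimately obtain lam where lam: "laplacian_eigenvalue V E lam" "\<bar>1 - lam\<bar> = s"
    using laplacian_eigenvalue_of_walk_op_square s(1) by blast
  let ?S = "{\<bar>1 - lam\<bar> | lam. laplacian_eigenvalue V E lam}"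
  have "finite ?S"
    using finite_laplacian_eigenvalues by (simp add: setcompr_eq_image)
  moreover have "s \<in> ?S"
    using lam by auto
  ultimately have "spectral_eps V E \<le> s" "spectral_eps V E \<in> ?S"
    unfolding spectral_eps_def by (rule Min_le, intro Min_in) auto
  then have "(spectral_eps V E)\<^sup>2 \<le> \<mu>"
    using s by (auto intro!: power_mono)
  then have "(spectral_eps V E)\<^sup>2 * ip h h \<le> \<mu> * ip h h"
    using deg_inner_self_nonneg by (rule mult_right_mono)
  also have "\<dots> \<le> ip (P h) (P h)"
    using min unfolding \<mu>_def .
  finally show ?thesis .
qed

lemma spectral_eps_sym_diff_bound:
  assumes u: "u \<in> V" and v: "v \<in> V" and "u \<noteq> v"
  shows "(spectral_eps V E)\<^sup>2 * (real (deg V E u) + real (deg V E v))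
    \<le> (\<Sum>w\<in>sym_diff (nbhd V E u) (nbhd V E v). 1 / real (deg V E w))"
proof -
  define S where "S = sym_diff (nbhd V E u) (nbhd V E v)"
  have "S \<subseteq> V"
    unfolding S_def by (rule sym_diff_nbhd_subset)
  define f where "f = (\<lambda>y. (if y = u then 1 else 0) - (if y = v then 1 else 0 :: real))"
  have "ip f f = (\<Sum>x\<in>V. (if x = u then real (deg V E u) else 0) + (if x = v then real (deg V E v) else 0))"
    unfolding deg_inner_def f_def using \<open>u \<noteq> v\<close> by (intro sum.cong) auto
  also have "\<dots> = real (deg V E u) + real (deg V E v)"
    using finite_V u v by (simp add: sum.distrib)
  finally have norm_f: "ip f f = real (deg V E u) + real (deg V E v)" .
  have "P f x = ((if x \<in> nbhd V E u then 1 else 0) - (if x \<in> nbhd V E v then 1 else 0)) / real (deg V E x)"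
    if "x \<in> V" for x
    using finite_nbhd u v that E_sym
    by (auto simp: walk_op_def f_def sum_subtractf nbhd_def)
  then have "ip (P f) (P f) = (\<Sum>x\<in>V. if x \<in> S then 1 / real (deg V E x) else 0)"
    unfolding deg_inner_def S_def using deg_pos
    by (intro sum.cong) (auto simp: sym_diff_def power2_eq_square)
  also have "\<dots> = (\<Sum>w\<in>S. 1 / real (deg V E w))"
    using finite_V \<open>S \<subseteq> V\<close> by (simp add: sum.inter_restrict[symmetric] Int_absorb1)
  finally show ?thesis
    using spectral_eps_sq_bound[of f] u norm_f unfolding S_def by auto
qed

lemma low_degree_sym_diff_card:
  assumes u: "u \<in> V" and v: "v \<in> V" and "u \<noteq> v" and c: "c \<in> nbhd V E u" "c \<in> nbhd V E v"
    and d: "d \<ge> 3" "\<And>x. x \<in> V \<Longrightarrow> d \<le> deg V E x"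
    and eps: "(real d - 1) / (real d)\<^sup>2 < (spectral_eps V E)\<^sup>2"
  shows "card {w \<in> sym_diff (nbhd V E u) (nbhd V E v). deg V E w \<in> {d, d + 1}} \<ge> 2 * d - 1"
proof -
  define S where "S = sym_diff (nbhd V E u) (nbhd V E v)"
  define W where "W = {w \<in> S. deg V E w \<in> {d, d + 1}}"
  have "S \<subseteq> V" "W \<subseteq> S"
    unfolding S_def W_def using sym_diff_nbhd_subset by auto
  then have "finite S" "finite W"
    using finite_V by (auto intro: finite_subset)
  have "card S + 2 \<le> deg V E u + deg V E v"
    unfolding S_def deg_def using c by (intro card_sym_diff_common_elem finite_nbhd)
  moreover have "card S = card W + card (S - W)"
    using \<open>finite W\<close> \<open>W \<subseteq> S\<close> card_Diff_subset card_mono[OF \<open>finite S\<close> \<open>W \<subseteq> S\<close>] by fastforce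
  ultimately have card_bound: "card W + card (S - W) + 2 \<le> deg V E u + deg V E v"
    by simp
  have "(real d - 1) / (real d)\<^sup>2 * (real (deg V E u) + real (deg V E v))
      < (spectral_eps V E)\<^sup>2 * (real (deg V E u) + real (deg V E v))"
    using eps deg_pos[OF u] by (intro mult_strict_right_mono) auto
  also have "\<dots> \<le> (\<Sum>w\<in>S. 1 / real (deg V E w))"
    unfolding S_def using u v \<open>u \<noteq> v\<close> by (rule spectral_eps_sym_diff_bound)
  also have "\<dots> \<le> real (card W) / real d + real (card (S - W)) / real (d + 2)"
  proof (rule sum_inverse_le_two_levels)
    show "d \<le> deg V E x" if "x \<in> W" for x
      using that \<open>W \<subseteq> S\<close> \<open>S \<subseteq> V\<close> d(2) by blast
    show "d + 2 \<le> deg V E x" if "x \<in> S - W" for x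
      using that \<open>S \<subseteq> V\<close> d(2)[of x] unfolding W_def by auto
  qed (use \<open>finite S\<close> \<open>W \<subseteq> S\<close> d(1) in auto)
  finally have "real (card W) > 2 * real d - 2"
    using d(2)[OF u] d(2)[OF v] card_bound d(1)
    by (intro two_level_count_bound[where a = "real (deg V E u) + real (deg V E v)"
          and L = "real (card (S - W))"]) (auto simp: add.commute)
  then show ?thesis
    unfolding W_def S_def by linarith
qed

end

lemma min_degree_le_deg:
  assumes "simple_graph V E" "x \<in> V"
  shows "min_degree V E \<le> deg V E x"
  using assms unfolding min_degree_def simple_graph_def by (intro Min_le) auto

theorem mainTheorem20:
  fixes V :: "'a set" and E :: "'a \<Rightarrow> 'a \<Rightarrow> bool" and u v :: 'a
  assumes "simple_graph V E"
    and "connected_graph V E"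
    and "card V \<ge> 3"
    and "min_degree V E \<ge> 3"
    and "spectral_eps V E > sqrt (real (min_degree V E) - 1) / real (min_degree V E)"
    and "u \<in> V" and "v \<in> V" and "u \<noteq> v"
    and "nbhd V E u \<inter> nbhd V E v \<noteq> {}"
  shows "card {w \<in> sym_diff (nbhd V E u) (nbhd V E v).
            deg V E w \<in> {min_degree V E, min_degree V E + 1}} \<ge> 2 * min_degree V E - 1"
proof -
  let ?d = "min_degree V E"
  interpret nonisolated_graph V E
    using assms(1,4) min_degree_le_deg[OF assms(1)] by unfold_locales fastforce+
  have "(real ?d - 1) / (real ?d)\<^sup>2 < (spectral_eps V E)\<^sup>2"
    using assms(4,5) power_strict_mono[of "sqrt (real ?d - 1) / real ?d" _ 2]
    by (simp add: power_divide)
  moreover obtain c where "c \<in> nbhd V E u" "c \<in> nbhd V E v"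
    using assms(9) by blast
  ultimately show ?thesis
    using assms(4,6-8) min_degree_le_deg[OF assms(1)] by (intro low_degree_sym_diff_card) auto
qed

end
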